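(* Let $G$ be a SIN topological group and $\Omega$ a topological group. Then the right action of $G$ on $\mathcal R(\Omega,G)$ by conjugation, $(\varphi,g)\mapsto g^{-1}\varphi g$, is uniformly continuous, where $G$ carries its uniform structure with entourages $\{(\tilde g,g):\tilde gg^{-1}\in V\}$ and $\mathcal R(\Omega,G)$ carries the uniform structure $\mathbf U_{\mathcal R}$.
   Context: SIN: the identity has a fundamental system of conjugation-invariant neighbourhoods. $\mathcal R(\Omega,G)$ is the set of continuous homomorphisms $\Omega\to G$. $\mathcal V_G$ is the set of open neighbourhoods $V$ of the identity of $G$ with $V=V^{-1}$. $\mathbf U_{\mathcal R}$ is the uniform structure on $\mathcal R(\Omega,G)$ with fundamental entourages $\mathcal O(K,V)=\{(h,\tilde h):\tilde h(c)h(c^{-1})\in V\ \forall c\in K\}$, $K\subset\Omega$ compact, $V\in\mathcal V_G$. (In the paper $\Omega=\Omega_C$ for an $X$-groupoid $C$.) *)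

theory Defs
  imports "HOL-Analysis.Analysis" "HOL-Algebra.Group"
begin

definition topological_group :: "('a, 'm) monoid_scheme \<Rightarrow> 'a topology \<Rightarrow> bool" where
  "topological_group G T \<longleftrightarrow> group G \<and> topspace T = carrier G \<and>
     continuous_map (prod_topology T T) T (\<lambda>(x, y). x \<otimes>\<^bsub>G\<^esub> y) \<and>
     continuous_map T T (\<lambda>x. inv\<^bsub>G\<^esub> x)"

definition sym_nhds :: "('a, 'm) monoid_scheme \<Rightarrow> 'a topology \<Rightarrow> 'a set set" where
  "sym_nhds G T = {V. openin T V \<and> \<one>\<^bsub>G\<^esub> \<in> V \<and> (\<lambda>x. inv\<^bsub>G\<^esub> x) ` V = V}"

definition SIN_group :: "('a, 'm) monoid_scheme \<Rightarrow> 'a topology \<Rightarrow> bool" where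
  "SIN_group G T \<longleftrightarrow> topological_group G T \<and>
     (\<forall>U. openin T U \<and> \<one>\<^bsub>G\<^esub> \<in> U \<longrightarrow>
        (\<exists>N. N \<subseteq> U \<and> (\<exists>W. openin T W \<and> \<one>\<^bsub>G\<^esub> \<in> W \<and> W \<subseteq> N) \<and>
             (\<forall>g \<in> carrier G. (\<lambda>x. g \<otimes>\<^bsub>G\<^esub> x \<otimes>\<^bsub>G\<^esub> inv\<^bsub>G\<^esub> g) ` N = N)))"

definition cont_homs ::
  "('b, 'n) monoid_scheme \<Rightarrow> 'b topology \<Rightarrow> ('a, 'm) monoid_scheme \<Rightarrow> 'a topology \<Rightarrow> ('b \<Rightarrow> 'a) set" where
  "cont_homs H TH G TG = {h. h \<in> hom H G \<and> continuous_map TH TG h}"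

definition ent_R ::
  "('b, 'n) monoid_scheme \<Rightarrow> ('a, 'm) monoid_scheme \<Rightarrow> 'b set \<Rightarrow> 'a set \<Rightarrow> (('b \<Rightarrow> 'a) \<times> ('b \<Rightarrow> 'a)) set" where
  "ent_R H G K V = {(h, h'). \<forall>c \<in> K. h' c \<otimes>\<^bsub>G\<^esub> h (inv\<^bsub>H\<^esub> c) \<in> V}"

definition ent_G :: "('a, 'm) monoid_scheme \<Rightarrow> 'a set \<Rightarrow> ('a \<times> 'a) set" where
  "ent_G G V = {(g', g). g' \<otimes>\<^bsub>G\<^esub> inv\<^bsub>G\<^esub> g \<in> V}"

definition conj_act :: "('a, 'm) monoid_scheme \<Rightarrow> ('b \<Rightarrow> 'a) \<Rightarrow> 'a \<Rightarrow> ('b \<Rightarrow> 'a)" where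
  "conj_act G \<phi> g = (\<lambda>c. inv\<^bsub>G\<^esub> g \<otimes>\<^bsub>G\<^esub> \<phi> c \<otimes>\<^bsub>G\<^esub> g)"

end

theory Submission
  imports Defs
begin

text \<open>Write \<open>a = \<psi> c\<close>, \<open>b = \<phi> c\<close> and \<open>w = g' g\<^sup>-\<^sup>1\<close>. The quantity
  \<open>(g'\<^sup>-\<^sup>1 \<psi> g') c \<cdot> (g\<^sup>-\<^sup>1 \<phi> g) (c\<^sup>-\<^sup>1)\<close> controlled by \<open>\<O>(K,V)\<close> is the conjugate by \<open>g'\<^sup>-\<^sup>1\<close>
  of \<open>(a b\<^sup>-\<^sup>1) (b w b\<^sup>-\<^sup>1) w\<^sup>-\<^sup>1\<close>. The first factor is small because \<open>(\<phi>,\<psi>)\<close> is close on \<open>K\<close>,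
  the last because \<open>g'\<close> is close to \<open>g\<close>, and the middle one because a SIN group has
  small neighbourhoods of the identity that are stable under all conjugations. A
  conjugation-invariant neighbourhood inside \<open>V\<close> then absorbs the outer conjugation
  by \<open>g'\<^sup>-\<^sup>1\<close>, uniformly in \<open>g'\<close>.\<close>

definition conj_invariant :: "('a, 'm) monoid_scheme \<Rightarrow> 'a set \<Rightarrow> bool" where
  "conj_invariant G N \<longleftrightarrow> (\<forall>g \<in> carrier G. (\<lambda>x. g \<otimes>\<^bsub>G\<^esub> x \<otimes>\<^bsub>G\<^esub> inv\<^bsub>G\<^esub> g) ` N = N)"

lemma conj_invariantD:
  "conj_invariant G N \<Longrightarrow> x \<in> N \<Longrightarrow> g \<in> carrier G \<Longrightarrow> g \<otimes>\<^bsub>G\<^esub> x \<otimes>\<^bsub>G\<^esub> inv\<^bsub>G\<^esub> g \<in> N"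
  unfolding conj_invariant_def by blast

lemma (in group) conj_mult_conj_eq:
  assumes "a \<in> carrier G" "b \<in> carrier G" "g \<in> carrier G" "g' \<in> carrier G"
  shows "inv g' \<otimes> a \<otimes> g' \<otimes> (inv g \<otimes> inv b \<otimes> g) =
    inv g' \<otimes> ((a \<otimes> inv b) \<otimes> (b \<otimes> (g' \<otimes> inv g) \<otimes> inv b) \<otimes> inv (g' \<otimes> inv g)) \<otimes> g'"
proof -
  have cancel [simp]: "inv x \<otimes> (x \<otimes> y) = y" "x \<otimes> (inv x \<otimes> y) = y"
    if "x \<in> carrier G" "y \<in> carrier G" for x y
    using that by (simp_all add: m_assoc[symmetric])
  show ?thesis
    using assms by (simp add: m_assoc inv_mult_group)
qed

lemma ent_R_mono: "V \<subseteq> V' \<Longrightarrow> ent_R H G K V \<subseteq> ent_R H G K V'"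
  unfolding ent_R_def by blast

lemma conj_act_in_ent_R:
  assumes G: "group G" and H: "group H"
    and homs: "\<phi> \<in> hom H G" "\<psi> \<in> hom H G" and g: "g \<in> carrier G" "g' \<in> carrier G"
    and K: "K \<subseteq> carrier H"
    and close_homs: "(\<phi>, \<psi>) \<in> ent_R H G K U" and close_elts: "(g', g) \<in> ent_G G W"
    and N: "conj_invariant G N" "\<And>x y z. x \<in> U \<Longrightarrow> y \<in> U \<Longrightarrow> z \<in> U \<Longrightarrow> x \<otimes>\<^bsub>G\<^esub> y \<otimes>\<^bsub>G\<^esub> z \<in> N"
    and W: "\<And>w b. w \<in> W \<Longrightarrow> b \<in> carrier G \<Longrightarrow> b \<otimes>\<^bsub>G\<^esub> w \<otimes>\<^bsub>G\<^esub> inv\<^bsub>G\<^esub> b \<in> U"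
      "\<And>w. w \<in> W \<Longrightarrow> inv\<^bsub>G\<^esub> w \<in> U"
  shows "(conj_act G \<phi> g, conj_act G \<psi> g') \<in> ent_R H G K N"
  unfolding ent_R_def
proof clarify
  fix c assume "c \<in> K"
  with K have c: "c \<in> carrier H" by blast
  define a b w where "a = \<psi> c" and "b = \<phi> c" and "w = g' \<otimes>\<^bsub>G\<^esub> inv\<^bsub>G\<^esub> g"
  have ab: "a \<in> carrier G" "b \<in> carrier G"
    unfolding a_def b_def using homs c by (simp_all add: hom_in_carrier)
  have inv_b: "\<phi> (inv\<^bsub>H\<^esub> c) = inv\<^bsub>G\<^esub> b"
    unfolding b_def using homs(1) c G H by (simp add: group_hom.hom_inv group_hom_def group_hom_axioms_def)
  have "a \<otimes>\<^bsub>G\<^esub> inv\<^bsub>G\<^esub> b \<in> U"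
    using close_homs \<open>c \<in> K\<close> unfolding ent_R_def a_def inv_b[symmetric] by blast
  moreover have "w \<in> W"
    using close_elts unfolding ent_G_def w_def by blast
  ultimately have "(a \<otimes>\<^bsub>G\<^esub> inv\<^bsub>G\<^esub> b) \<otimes>\<^bsub>G\<^esub> (b \<otimes>\<^bsub>G\<^esub> w \<otimes>\<^bsub>G\<^esub> inv\<^bsub>G\<^esub> b) \<otimes>\<^bsub>G\<^esub> inv\<^bsub>G\<^esub> w \<in> N"
    using N(2) W ab(2) by blast
  from conj_invariantD[OF N(1) this, of "inv\<^bsub>G\<^esub> g'"]
  have "inv\<^bsub>G\<^esub> g' \<otimes>\<^bsub>G\<^esub> ((a \<otimes>\<^bsub>G\<^esub> inv\<^bsub>G\<^esub> b) \<otimes>\<^bsub>G\<^esub> (b \<otimes>\<^bsub>G\<^esub> w \<otimes>\<^bsub>G\<^esub> inv\<^bsub>G\<^esub> b) \<otimes>\<^bsub>G\<^esub> inv\<^bsub>G\<^esub> w)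
      \<otimes>\<^bsub>G\<^esub> g' \<in> N"
    using g G by simp
  moreover have "conj_act G \<psi> g' c \<otimes>\<^bsub>G\<^esub> conj_act G \<phi> g (inv\<^bsub>H\<^esub> c) =
      inv\<^bsub>G\<^esub> g' \<otimes>\<^bsub>G\<^esub> ((a \<otimes>\<^bsub>G\<^esub> inv\<^bsub>G\<^esub> b) \<otimes>\<^bsub>G\<^esub> (b \<otimes>\<^bsub>G\<^esub> w \<otimes>\<^bsub>G\<^esub> inv\<^bsub>G\<^esub> b) \<otimes>\<^bsub>G\<^esub> inv\<^bsub>G\<^esub> w)
      \<otimes>\<^bsub>G\<^esub> g'"
    unfolding conj_act_def inv_b a_def[symmetric] w_def
    by (rule group.conj_mult_conj_eq[OF G ab g])
  ultimately show "conj_act G \<psi> g' c \<otimes>\<^bsub>G\<^esub> conj_act G \<phi> g (inv\<^bsub>H\<^esub> c) \<in> N"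
    by simp
qed

lemma sym_nhds_inv_closed: "V \<in> sym_nhds G T \<Longrightarrow> x \<in> V \<Longrightarrow> inv\<^bsub>G\<^esub> x \<in> V"
  unfolding sym_nhds_def by blast

lemma sym_nhds_symmetric_part:
  assumes tg: "topological_group G T" and U: "openin T U" "\<one>\<^bsub>G\<^esub> \<in> U"
  shows "{x \<in> U. inv\<^bsub>G\<^esub> x \<in> U} \<in> sym_nhds G T"
proof -
  have G: "group G" and carrier: "topspace T = carrier G"
    and inv_cont: "continuous_map T T (\<lambda>x. inv\<^bsub>G\<^esub> x)"
    using tg unfolding topological_group_def by auto
  have inv_inv: "inv\<^bsub>G\<^esub> (inv\<^bsub>G\<^esub> x) = x" if "x \<in> U" for x
    using that openin_subset[OF U(1)] carrier G by (simp add: group.inv_inv subset_iff)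
  have "(\<lambda>x. inv\<^bsub>G\<^esub> x) ` {x \<in> U. inv\<^bsub>G\<^esub> x \<in> U} = {x \<in> U. inv\<^bsub>G\<^esub> x \<in> U}"
  proof (rule subset_antisym)
    show "(\<lambda>x. inv\<^bsub>G\<^esub> x) ` {x \<in> U. inv\<^bsub>G\<^esub> x \<in> U} \<subseteq> {x \<in> U. inv\<^bsub>G\<^esub> x \<in> U}"
      using inv_inv by auto
    show "{x \<in> U. inv\<^bsub>G\<^esub> x \<in> U} \<subseteq> (\<lambda>x. inv\<^bsub>G\<^esub> x) ` {x \<in> U. inv\<^bsub>G\<^esub> x \<in> U}"
      using inv_inv by (auto intro!: image_eqI[where x = "inv\<^bsub>G\<^esub> _"])
  qed
  moreover have "openin T {x \<in> U. inv\<^bsub>G\<^esub> x \<in> U}"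
    by (rule openin_continuous_map_preimage_gen[OF inv_cont U(1) U(1)])
  ultimately show ?thesis
    using U G unfolding sym_nhds_def by (simp add: group.is_monoid monoid.inv_one)
qed

lemma topological_group_product_nhds:
  assumes tg: "topological_group G T" and W: "openin T W" "\<one>\<^bsub>G\<^esub> \<in> W"
  obtains U where "openin T U" "\<one>\<^bsub>G\<^esub> \<in> U" "\<And>x y. x \<in> U \<Longrightarrow> y \<in> U \<Longrightarrow> x \<otimes>\<^bsub>G\<^esub> y \<in> W"
proof -
  have G: "group G" and carrier: "topspace T = carrier G"
    and mult_cont: "continuous_map (prod_topology T T) T (\<lambda>(x, y). x \<otimes>\<^bsub>G\<^esub> y)"
    using tg unfolding topological_group_def by auto
  let ?M = "{p \<in> topspace (prod_topology T T). (\<lambda>(x, y). x \<otimes>\<^bsub>G\<^esub> y) p \<in> W}"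
  have M_open: "openin (prod_topology T T) ?M"
    by (rule openin_continuous_map_preimage[OF mult_cont W(1)])
  have one_M: "(\<one>\<^bsub>G\<^esub>, \<one>\<^bsub>G\<^esub>) \<in> ?M"
    using W(2) carrier monoid.one_closed[OF group.is_monoid[OF G]] monoid.l_one[OF group.is_monoid[OF G]]
    by simp
  obtain A B where AB: "openin T A" "openin T B" "\<one>\<^bsub>G\<^esub> \<in> A" "\<one>\<^bsub>G\<^esub> \<in> B" "A \<times> B \<subseteq> ?M"
    using openin_prod_topology_alt[THEN iffD1, rule_format, OF M_open one_M] by blast
  show thesis
  proof (rule that[of "A \<inter> B"])
    show "x \<otimes>\<^bsub>G\<^esub> y \<in> W" if "x \<in> A \<inter> B" "y \<in> A \<inter> B" for x y
      using subsetD[OF AB(5), of "(x, y)"] that by simp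
  qed (use AB in auto)
qed

lemma topological_group_triple_product_nhds:
  assumes tg: "topological_group G T" and W: "openin T W" "\<one>\<^bsub>G\<^esub> \<in> W"
  obtains U where "U \<in> sym_nhds G T"
    "\<And>x y z. x \<in> U \<Longrightarrow> y \<in> U \<Longrightarrow> z \<in> U \<Longrightarrow> x \<otimes>\<^bsub>G\<^esub> y \<otimes>\<^bsub>G\<^esub> z \<in> W"
proof -
  have G: "group G" and carrier: "topspace T = carrier G"
    using tg unfolding topological_group_def by auto
  obtain U1 where U1: "openin T U1" "\<one>\<^bsub>G\<^esub> \<in> U1" "\<And>x y. x \<in> U1 \<Longrightarrow> y \<in> U1 \<Longrightarrow> x \<otimes>\<^bsub>G\<^esub> y \<in> W"
    using topological_group_product_nhds[OF tg W] by blast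
  obtain U where U: "openin T U" "\<one>\<^bsub>G\<^esub> \<in> U" "\<And>x y. x \<in> U \<Longrightarrow> y \<in> U \<Longrightarrow> x \<otimes>\<^bsub>G\<^esub> y \<in> U1"
    using topological_group_product_nhds[OF tg U1(1,2)] by blast
  have "U \<subseteq> U1"
    using U(2,3) openin_subset[OF U(1)] carrier G by (metis group.is_monoid monoid.r_one subsetD subsetI)
  then show thesis
    using U U1(3) by (intro that[OF sym_nhds_symmetric_part[OF tg U(1,2)]]) auto
qed

lemma SIN_group_invariant_nhds:
  assumes sin: "SIN_group G T" and U: "openin T U" "\<one>\<^bsub>G\<^esub> \<in> U"
  obtains N W where "conj_invariant G N" "N \<subseteq> U" "W \<in> sym_nhds G T" "W \<subseteq> N"
proof -
  have tg: "topological_group G T"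
    using sin unfolding SIN_group_def by blast
  have "\<exists>N. N \<subseteq> U \<and> (\<exists>W. openin T W \<and> \<one>\<^bsub>G\<^esub> \<in> W \<and> W \<subseteq> N) \<and> conj_invariant G N"
    using sin U unfolding SIN_group_def conj_invariant_def by simp
  then obtain N W where N: "N \<subseteq> U" "conj_invariant G N" and W: "openin T W" "\<one>\<^bsub>G\<^esub> \<in> W" "W \<subseteq> N"
    by blast
  show thesis
    by (rule that[OF N(2,1) sym_nhds_symmetric_part[OF tg W(1,2)]]) (use W(3) in blast)
qed

lemma SIN_conj_act_entourages:
  assumes sin: "SIN_group G TG" and tgH: "topological_group H TH"
    and K: "compactin TH K" and V: "V \<in> sym_nhds G TG"
  shows "\<exists>K' V' W. compactin TH K' \<and> V' \<in> sym_nhds G TG \<and> W \<in> sym_nhds G TG \<and>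
    (\<forall>\<phi> \<psi> g g'. \<phi> \<in> cont_homs H TH G TG \<and> \<psi> \<in> cont_homs H TH G TG \<and>
       g \<in> carrier G \<and> g' \<in> carrier G \<and>
       (\<phi>, \<psi>) \<in> ent_R H G K' V' \<and> (g', g) \<in> ent_G G W \<longrightarrow>
       (conj_act G \<phi> g, conj_act G \<psi> g') \<in> ent_R H G K V)"
proof -
  have tg: "topological_group G TG" and G: "group G" and H: "group H"
    and K_carrier: "K \<subseteq> carrier H"
    using sin tgH compactin_subset_topspace[OF K] unfolding SIN_group_def topological_group_def by auto
  have open_nhds: "openin TG U" "\<one>\<^bsub>G\<^esub> \<in> U" if "U \<in> sym_nhds G TG" for U
    using that unfolding sym_nhds_def by auto
  obtain N W0 where N: "conj_invariant G N" "N \<subseteq> V" "W0 \<in> sym_nhds G TG" "W0 \<subseteq> N"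
    by (rule SIN_group_invariant_nhds[OF sin open_nhds[OF V]])
  obtain V' where V': "V' \<in> sym_nhds G TG"
    "\<And>x y z. x \<in> V' \<Longrightarrow> y \<in> V' \<Longrightarrow> z \<in> V' \<Longrightarrow> x \<otimes>\<^bsub>G\<^esub> y \<otimes>\<^bsub>G\<^esub> z \<in> W0"
    using topological_group_triple_product_nhds[OF tg open_nhds[OF N(3)]] by blast
  obtain N1 W where W: "conj_invariant G N1" "N1 \<subseteq> V'" "W \<in> sym_nhds G TG" "W \<subseteq> N1"
    by (rule SIN_group_invariant_nhds[OF sin open_nhds[OF V'(1)]])
  have "(conj_act G \<phi> g, conj_act G \<psi> g') \<in> ent_R H G K V"
    if "\<phi> \<in> hom H G" "\<psi> \<in> hom H G" "g \<in> carrier G" "g' \<in> carrier G"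
      "(\<phi>, \<psi>) \<in> ent_R H G K V'" "(g', g) \<in> ent_G G W" for \<phi> \<psi> g g'
  proof -
    have "(conj_act G \<phi> g, conj_act G \<psi> g') \<in> ent_R H G K N"
    proof (rule conj_act_in_ent_R[OF G H that(1-4) K_carrier that(5,6) N(1)])
      show "x \<otimes>\<^bsub>G\<^esub> y \<otimes>\<^bsub>G\<^esub> z \<in> N" if "x \<in> V'" "y \<in> V'" "z \<in> V'" for x y z
        using V'(2)[OF that] N(4) by blast
      show "b \<otimes>\<^bsub>G\<^esub> w \<otimes>\<^bsub>G\<^esub> inv\<^bsub>G\<^esub> b \<in> V'" if "w \<in> W" "b \<in> carrier G" for w b
        using conj_invariantD[OF W(1) _ that(2)] that(1) W(2,4) by blast
      show "inv\<^bsub>G\<^esub> w \<in> V'" if "w \<in> W" for w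
        using sym_nhds_inv_closed[OF W(3) that] W(2,4) by blast
    qed
    then show ?thesis
      using ent_R_mono[OF N(2)] by blast
  qed
  then show ?thesis
    using K V'(1) W(3) unfolding cont_homs_def by (intro exI[of _ K] exI[of _ V'] exI[of _ W]) auto
qed

theorem proposition3p4:
  fixes G :: "('a, 'm) monoid_scheme" and TG :: "'a topology"
    and H :: "('b, 'n) monoid_scheme" and TH :: "'b topology"
  assumes "SIN_group G TG"
    and "topological_group H TH"
  shows "\<forall>K V. compactin TH K \<and> V \<in> sym_nhds G TG \<longrightarrow>
           (\<exists>K' V' W. compactin TH K' \<and> V' \<in> sym_nhds G TG \<and> W \<in> sym_nhds G TG \<and>
              (\<forall>\<phi> \<psi> g g'. \<phi> \<in> cont_homs H TH G TG \<and> \<psi> \<in> cont_homs H TH G TG \<and>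
                  g \<in> carrier G \<and> g' \<in> carrier G \<and>
                  (\<phi>, \<psi>) \<in> ent_R H G K' V' \<and> (g', g) \<in> ent_G G W \<longrightarrow>
                  (conj_act G \<phi> g, conj_act G \<psi> g') \<in> ent_R H G K V))"
  using SIN_conj_act_entourages[OF assms] by blast

end
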